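(* Let $G$ be a finite abstract simplicial complex of odd maximal dimension $d$. If $G$ is Dehn-Sommerville, then $w(G)=0$. In particular, every odd-dimensional $d$-manifold $G$ satisfies $w(G)=0$.
   Context: A finite abstract simplicial complex is a finite set of non-empty finite sets closed under taking non-empty subsets; its maximal dimension is $d=\max_{x\in G}(|x|-1)$. For $x\in G$, $w(x)=(-1)^{|x|-1}$ and $w(G)=\sum_{x\in G}w(x)$. $f_k(G)$ is the number of elements of $G$ of cardinality $k+1$, $f_G(t)=1+\sum_{k=0}^{d} f_k(G)\,t^{k+1}$, and $h_G(x)=(x-1)^{d+1} f_G(1/(x-1)) = h_0+h_1x+\cdots+h_{d+1}x^{d+1}$. $G$ is Dehn-Sommerville if $h_i=h_{d+1-i}$ for all $i$. Manifolds: for $x\in G$, $U(x)=\{y\in G: x\subset y\}$, $B(x)=\{y\in G : y\subset z \text{ for some } z\in U(x)\}$, $S(x)=B(x)\setminus U(x)$. A one-point complex is contractible, and $G$ is contractible if there is $x\in G$ with $S(x)$ and $G\setminus U(x)$ contractible. The empty complex is the $(-1)$-sphere; for $k\ge0$, $G$ is a $k$-manifold if every $S(x)$ is a $(k-1)$-sphere, and a $k$-sphere if it is a $k$-manifold and $G\setminus U(x)$ is contractible for some $x$. *)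

theory Defs
  imports "HOL-Computational_Algebra.Polynomial"
begin

definition simplicial_complex :: "'a set set \<Rightarrow> bool" where
  "simplicial_complex G \<longleftrightarrow> finite G \<and> (\<forall>x\<in>G. x \<noteq> {} \<and> finite x) \<and>
     (\<forall>x\<in>G. \<forall>y. y \<noteq> {} \<and> y \<subseteq> x \<longrightarrow> y \<in> G)"

text \<open>Maximal dimension d = max (|x| - 1) (meaningful for non-empty G).\<close>
definition cdim :: "'a set set \<Rightarrow> nat" where
  "cdim G = Max ((\<lambda>x. card x - 1) ` G)"

definition wG :: "'a set set \<Rightarrow> int" where
  "wG G = (\<Sum>x\<in>G. (-1) ^ (card x - 1))"

definition fnum :: "'a set set \<Rightarrow> nat \<Rightarrow> nat" where
  "fnum G k = card {x \<in> G. card x = k + 1}"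

text \<open>h_G(x) = (x-1)^(d+1) f_G(1/(x-1)), with f_G(t) = 1 + sum_{k=0}^d f_k t^(k+1),
  written out as a polynomial: (x-1)^(d+1) + sum_{k=0}^d f_k (x-1)^(d-k).\<close>
definition hpoly :: "'a set set \<Rightarrow> int poly" where
  "hpoly G = [:-1, 1:] ^ (cdim G + 1)
     + (\<Sum>k\<le>cdim G. of_nat (fnum G k) * [:-1, 1:] ^ (cdim G - k))"

definition dehn_sommerville :: "'a set set \<Rightarrow> bool" where
  "dehn_sommerville G \<longleftrightarrow>
     (\<forall>i\<le>cdim G + 1. coeff (hpoly G) i = coeff (hpoly G) (cdim G + 1 - i))"

definition Ustar :: "'a set set \<Rightarrow> 'a set \<Rightarrow> 'a set set" where
  "Ustar G x = {y \<in> G. x \<subseteq> y}"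

definition Bstar :: "'a set set \<Rightarrow> 'a set \<Rightarrow> 'a set set" where
  "Bstar G x = {y \<in> G. \<exists>z\<in>Ustar G x. y \<subseteq> z}"

definition Sph :: "'a set set \<Rightarrow> 'a set \<Rightarrow> 'a set set" where
  "Sph G x = Bstar G x - Ustar G x"

inductive contractible :: "'a set set \<Rightarrow> bool" where
  one_point: "contractible {{v}}"
| step: "x \<in> G \<Longrightarrow> contractible (Sph G x) \<Longrightarrow> contractible (G - Ustar G x)
         \<Longrightarrow> contractible G"

text \<open>sphere_sh n G  means: G is an (n-1)-sphere.\<close>
fun sphere_sh :: "nat \<Rightarrow> 'a set set \<Rightarrow> bool" where
  "sphere_sh 0 G = (G = {})"
| "sphere_sh (Suc k) G =
     ((\<forall>x\<in>G. sphere_sh k (Sph G x)) \<and> (\<exists>x\<in>G. contractible (G - Ustar G x)))"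

definition manifold :: "nat \<Rightarrow> 'a set set \<Rightarrow> bool" where
  "manifold k G \<longleftrightarrow> (\<forall>x\<in>G. sphere_sh k (Sph G x))"

end

theory Submission
  imports Defs
begin

(* Dehn-Sommerville part: h_0 = h_G(0) = (-1)^(d+1) f_G(-1) = (-1)^(d+1) (1 - w(G)), while the
   leading coefficient h_(d+1) is 1, so h_0 = h_(d+1) forces w(G) = 1 + (-1)^d.
   Manifold part: a cone has w = 1, because adding the apex is a sign-reversing bijection from
   the faces avoiding it onto the faces containing it, apart from the apex itself.  The simplex
   below a face z and the closed star B(x) are cones, whence sum_(x <= z) w(x) = 1 and
   w(U(x)) = 1 - w(S(x)).  Induction gives w = 1 + (-1)^k for k-spheres, so in a manifold of odd
   dimension every S(x) has w = 2 and every U(x) has w = -1.  Counting pairs x <= y with weight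
   w(x) w(y) in both orders then gives w(G) = sum_x w(x) w(U(x)) = -w(G). *)

definition face_weight :: "'a set \<Rightarrow> int" where
  "face_weight x = (-1) ^ (card x - 1)"

lemma wG_eq_sum_face_weight: "wG G = sum face_weight G"
  by (simp add: wG_def face_weight_def)

lemma face_weight_insert:
  assumes "finite y" "y \<noteq> {}" "v \<notin> y"
  shows "face_weight (insert v y) = - face_weight y"
proof -
  obtain n where "card y = Suc n"
    using assms(1,2) by (metis card_0_eq not0_implies_Suc)
  then show ?thesis
    using assms by (simp add: face_weight_def)
qed

lemma wG_Un_disjoint: "finite A \<Longrightarrow> finite B \<Longrightarrow> A \<inter> B = {} \<Longrightarrow> wG (A \<union> B) = wG A + wG B"
  unfolding wG_eq_sum_face_weight by (rule sum.union_disjoint)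

lemma simplicial_complex_finite: "simplicial_complex G \<Longrightarrow> finite G"
  by (simp add: simplicial_complex_def)

lemma simplicial_complex_face:
  "simplicial_complex G \<Longrightarrow> y \<in> G \<Longrightarrow> y \<noteq> {} \<and> finite y"
  unfolding simplicial_complex_def by blast

lemma simplicial_complex_subface:
  "simplicial_complex G \<Longrightarrow> y \<in> G \<Longrightarrow> z \<subseteq> y \<Longrightarrow> z \<noteq> {} \<Longrightarrow> z \<in> G"
  unfolding simplicial_complex_def by blast

lemma simplicial_complex_subcomplex:
  assumes "simplicial_complex G" "H \<subseteq> G"
    and "\<And>y z. y \<in> H \<Longrightarrow> z \<in> G \<Longrightarrow> z \<subseteq> y \<Longrightarrow> z \<in> H"
  shows "simplicial_complex H"
proof -
  have "finite H"
    using assms(1,2) finite_subset simplicial_complex_finite by blast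
  moreover have "y \<noteq> {} \<and> finite y" if "y \<in> H" for y
    using assms(1,2) that simplicial_complex_face by blast
  moreover have "z \<in> H" if "y \<in> H" "z \<noteq> {}" "z \<subseteq> y" for y z
    using assms that simplicial_complex_subface by blast
  ultimately show ?thesis
    unfolding simplicial_complex_def by blast
qed

lemma simplicial_complex_Sph: "simplicial_complex G \<Longrightarrow> simplicial_complex (Sph G x)"
  by (rule simplicial_complex_subcomplex)
     (auto simp: Sph_def Bstar_def Ustar_def)

lemma simplicial_complex_Diff_Ustar: "simplicial_complex G \<Longrightarrow> simplicial_complex (G - Ustar G x)"
  by (rule simplicial_complex_subcomplex) (auto simp: Ustar_def)

lemma wG_Ustar_Diff: "finite G \<Longrightarrow> wG G = wG (G - Ustar G x) + wG (Ustar G x)"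
  unfolding wG_eq_sum_face_weight
  by (metis sum.subset_diff Ustar_def mem_Collect_eq subsetI)

lemma wG_cone:
  assumes sc: "simplicial_complex K" and apex: "{v} \<in> K" "\<And>y. y \<in> K \<Longrightarrow> insert v y \<in> K"
  shows "wG K = 1"
proof -
  define A0 where "A0 = {y \<in> K. v \<notin> y}"
  define A1 where "A1 = {y \<in> K. v \<in> y}"
  have fin: "finite A0" "finite A1"
    using simplicial_complex_finite[OF sc] by (simp_all add: A0_def A1_def)
  have "bij_betw (insert v) A0 (A1 - {{v}})"
  proof (rule bij_betw_byWitness[where f' = "\<lambda>y. y - {v}"])
    show "insert v ` A0 \<subseteq> A1 - {{v}}"
      using apex(2) simplicial_complex_face[OF sc] by (auto simp: A0_def A1_def)
    show "(\<lambda>y. y - {v}) ` (A1 - {{v}}) \<subseteq> A0"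
    proof (clarsimp simp: A0_def A1_def)
      fix y assume "y \<in> K" "v \<in> y" "y \<noteq> {v}"
      then show "y - {v} \<in> K" using simplicial_complex_subface[OF sc, of y "y - {v}"] by auto
    qed
  qed (auto simp: A0_def A1_def)
  then have "wG (A1 - {{v}}) = sum (face_weight \<circ> insert v) A0"
    unfolding wG_eq_sum_face_weight by (simp add: sum.reindex_bij_betw)
  also have "\<dots> = - wG A0"
    unfolding wG_eq_sum_face_weight sum_negf[symmetric]
    using simplicial_complex_face[OF sc] by (intro sum.cong) (auto simp: A0_def face_weight_insert)
  finally have "wG A1 = 1 - wG A0"
    using apex(1) fin sum.remove[of A1 "{v}" face_weight]
    by (simp add: wG_eq_sum_face_weight A1_def face_weight_def)
  moreover have "K = A0 \<union> A1" "A0 \<inter> A1 = {}"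
    by (auto simp: A0_def A1_def)
  ultimately show ?thesis
    using fin wG_Un_disjoint[of A0 A1] by simp
qed

lemma wG_simplex:
  assumes sc: "simplicial_complex G" and "z \<in> G"
  shows "wG {x \<in> G. x \<subseteq> z} = 1"
proof -
  obtain v where "v \<in> z"
    using simplicial_complex_face[OF sc \<open>z \<in> G\<close>] by blast
  show ?thesis
  proof (rule wG_cone)
    show "simplicial_complex {x \<in> G. x \<subseteq> z}"
      by (rule simplicial_complex_subcomplex[OF sc]) auto
    show "{v} \<in> {x \<in> G. x \<subseteq> z}"
      using \<open>v \<in> z\<close> simplicial_complex_subface[OF sc \<open>z \<in> G\<close>] by simp
    show "insert v y \<in> {x \<in> G. x \<subseteq> z}" if "y \<in> {x \<in> G. x \<subseteq> z}" for y
      using that \<open>v \<in> z\<close> simplicial_complex_subface[OF sc \<open>z \<in> G\<close>, of "insert v y"] by simp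
  qed
qed

lemma wG_Bstar:
  assumes sc: "simplicial_complex G" and "x \<in> G"
  shows "wG (Bstar G x) = 1"
proof -
  obtain v where "v \<in> x"
    using simplicial_complex_face[OF sc \<open>x \<in> G\<close>] by blast
  have cone: "insert v y \<in> Bstar G x" if "y \<in> Bstar G x" for y
  proof -
    from that obtain z where "z \<in> G" "x \<subseteq> z" "y \<subseteq> z"
      by (auto simp: Bstar_def Ustar_def)
    with \<open>v \<in> x\<close> show ?thesis
      using simplicial_complex_subface[OF sc \<open>z \<in> G\<close>, of "insert v y"]
      by (auto simp: Bstar_def Ustar_def)
  qed
  show ?thesis
  proof (rule wG_cone[OF _ _ cone])
    show "simplicial_complex (Bstar G x)"
      by (rule simplicial_complex_subcomplex[OF sc]) (auto simp: Bstar_def)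
    show "{v} \<in> Bstar G x"
      using \<open>x \<in> G\<close> \<open>v \<in> x\<close> simplicial_complex_subface[OF sc \<open>x \<in> G\<close>, of "{v}"]
      by (auto simp: Bstar_def Ustar_def)
  qed
qed

lemma wG_Ustar:
  assumes sc: "simplicial_complex G" and "x \<in> G"
  shows "wG (Ustar G x) = 1 - wG (Sph G x)"
proof -
  have "Bstar G x = Ustar G x \<union> Sph G x" "Ustar G x \<inter> Sph G x = {}"
    by (auto simp: Sph_def Bstar_def Ustar_def)
  moreover have "finite (Bstar G x)"
    using simplicial_complex_finite[OF sc] by (simp add: Bstar_def)
  ultimately show ?thesis
    using wG_Bstar[OF assms] wG_Un_disjoint[of "Ustar G x" "Sph G x"] by simp
qed

lemma wG_contractible: "contractible G \<Longrightarrow> simplicial_complex G \<Longrightarrow> wG G = 1"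
proof (induction rule: contractible.induct)
  case (one_point v)
  then show ?case by (simp add: wG_def)
next
  case (step x G)
  have "wG G = wG (G - Ustar G x) + wG (Ustar G x)"
    using step.prems by (simp add: wG_Ustar_Diff simplicial_complex_finite)
  also have "\<dots> = 1 + (1 - wG (Sph G x))"
    using step simplicial_complex_Diff_Ustar wG_Ustar by metis
  also have "wG (Sph G x) = 1"
    using step simplicial_complex_Sph by blast
  finally show ?case by simp
qed

lemma wG_sphere: "sphere_sh n H \<Longrightarrow> simplicial_complex H \<Longrightarrow> wG H = 1 - (-1) ^ n"
proof (induction n arbitrary: H)
  case 0
  then show ?case by (simp add: wG_def)
next
  case (Suc k)
  then obtain x where x: "x \<in> H" "contractible (H - Ustar H x)"
    by auto
  have "wG H = wG (H - Ustar H x) + wG (Ustar H x)"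
    using Suc.prems by (simp add: wG_Ustar_Diff simplicial_complex_finite)
  also have "\<dots> = 1 + (1 - wG (Sph H x))"
    using Suc.prems x wG_contractible simplicial_complex_Diff_Ustar wG_Ustar by metis
  also have "wG (Sph H x) = 1 - (-1) ^ k"
    using Suc x(1) simplicial_complex_Sph by auto
  finally show ?case by simp
qed

lemma wG_double_count:
  assumes sc: "simplicial_complex G"
  shows "wG G = (\<Sum>x\<in>G. face_weight x * wG (Ustar G x))"
proof -
  have fin: "finite G"
    using sc by (rule simplicial_complex_finite)
  have "(\<Sum>x\<in>G. face_weight x * wG (Ustar G x))
      = (\<Sum>x\<in>G. \<Sum>y\<in>{y. y \<in> G \<and> x \<subseteq> y}. face_weight x * face_weight y)"
    by (simp add: Ustar_def wG_eq_sum_face_weight sum_distrib_left)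
  also have "\<dots> = (\<Sum>y\<in>G. \<Sum>x\<in>{x. x \<in> G \<and> x \<subseteq> y}. face_weight x * face_weight y)"
    by (rule sum.swap_restrict[OF fin fin])
  also have "\<dots> = (\<Sum>y\<in>G. wG {x \<in> G. x \<subseteq> y} * face_weight y)"
    by (simp add: wG_eq_sum_face_weight sum_distrib_right)
  also have "\<dots> = wG G"
    unfolding wG_eq_sum_face_weight[of G] by (rule sum.cong) (simp_all add: wG_simplex[OF sc])
  finally show ?thesis ..
qed

lemma wG_odd_manifold:
  assumes sc: "simplicial_complex G" and "odd d" and "manifold d G"
  shows "wG G = 0"
proof -
  have "wG (Ustar G x) = -1" if "x \<in> G" for x
    using assms that wG_sphere simplicial_complex_Sph wG_Ustar
    by (fastforce simp: manifold_def)
  then have "wG G = (\<Sum>x\<in>G. - face_weight x)"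
    unfolding wG_double_count[OF sc] by (intro sum.cong) simp_all
  then show ?thesis
    by (simp add: wG_eq_sum_face_weight sum_negf)
qed

lemma wG_eq_alternating_fnum:
  assumes sc: "simplicial_complex G"
  shows "wG G = (\<Sum>k\<le>cdim G. int (fnum G k) * (-1) ^ k)"
proof -
  have fin: "finite G"
    using sc by (rule simplicial_complex_finite)
  have dims: "(\<lambda>x. card x - 1) ` G \<subseteq> {..cdim G}"
    using fin by (auto simp: cdim_def)
  have "card x \<noteq> 0" if "x \<in> G" for x
    using simplicial_complex_face[OF sc that] by simp
  then have layer: "{x \<in> G. card x - 1 = k} = {x \<in> G. card x = k + 1}" for k
    by force
  have "wG G = (\<Sum>k\<le>cdim G. \<Sum>x\<in>{x \<in> G. card x - 1 = k}. face_weight x)"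
    unfolding wG_eq_sum_face_weight by (rule sum.group[OF fin _ dims, symmetric]) simp
  also have "\<dots> = (\<Sum>k\<le>cdim G. int (fnum G k) * (-1) ^ k)"
    unfolding layer fnum_def by (intro sum.cong) (simp_all add: face_weight_def)
  finally show ?thesis .
qed

lemma coeff_hpoly_0:
  assumes "simplicial_complex G"
  shows "coeff (hpoly G) 0 = (-1) ^ (cdim G + 1) * (1 - wG G)"
proof -
  have sign: "(-1::int) ^ (cdim G - k) = - ((-1) ^ (cdim G + 1) * (-1) ^ k)" if "k \<le> cdim G" for k
  proof -
    have exponent: "cdim G + 1 + k = (cdim G - k) + 2 * k + 1"
      using that by simp
    have "(-1::int) ^ (cdim G + 1) * (-1) ^ k = (-1) ^ (cdim G + 1 + k)"
      by (simp add: power_add)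
    also have "\<dots> = - ((-1) ^ (cdim G - k))"
      unfolding exponent by (simp add: power_add power_mult)
    finally show ?thesis by simp
  qed
  have "coeff (hpoly G) 0 = (-1) ^ (cdim G + 1) + (\<Sum>k\<le>cdim G. int (fnum G k) * (-1) ^ (cdim G - k))"
    unfolding hpoly_def poly_0_coeff_0[symmetric] by (simp add: poly_sum)
  also have "(\<Sum>k\<le>cdim G. int (fnum G k) * (-1) ^ (cdim G - k))
      = - ((-1) ^ (cdim G + 1) * (\<Sum>k\<le>cdim G. int (fnum G k) * (-1) ^ k))"
    unfolding sum_distrib_left sum_negf[symmetric]
    by (intro sum.cong) (simp_all only: atMost_iff sign mult.left_commute mult_minus_right)
  finally show ?thesis
    using wG_eq_alternating_fnum[OF assms] by (simp add: algebra_simps)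
qed

lemma coeff_hpoly_top: "coeff (hpoly G) (cdim G + 1) = 1"
proof -
  have lower: "coeff (of_nat (fnum G k) * [:-1, 1:] ^ (cdim G - k)) (cdim G + 1) = (0::int)" for k
  proof (rule coeff_eq_0)
    have "degree (of_nat (fnum G k) * [:-1, 1:] ^ (cdim G - k) :: int poly)
        \<le> degree (of_nat (fnum G k) :: int poly) + degree ([:-1, 1:] ^ (cdim G - k) :: int poly)"
      by (rule degree_mult_le)
    also have "\<dots> = cdim G - k"
      by (simp add: degree_linear_power)
    finally show "degree (of_nat (fnum G k) * [:-1, 1:] ^ (cdim G - k) :: int poly) < cdim G + 1"
      by simp
  qed
  show ?thesis
    unfolding hpoly_def coeff_add coeff_sum lower
    by (simp only: sum.neutral_const add_0_right coeff_linear_power)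
qed

lemma wG_dehn_sommerville:
  assumes "simplicial_complex G" "dehn_sommerville G"
  shows "wG G = 1 + (-1) ^ cdim G"
proof -
  have "coeff (hpoly G) 0 = coeff (hpoly G) (cdim G + 1)"
    using assms(2) unfolding dehn_sommerville_def by (metis diff_zero le0)
  then have "(-1) ^ (cdim G + 1) * (1 - wG G) = 1"
    by (simp only: coeff_hpoly_0[OF assms(1)] coeff_hpoly_top)
  then have "1 - wG G = (-1) ^ (cdim G + 1)"
    by (metis left_minus_one_mult_self mult_1_right)
  then show ?thesis by simp
qed

theorem mainTheorem10:
  shows "(\<forall>G :: 'a set set. simplicial_complex G \<and> G \<noteq> {} \<and> odd (cdim G)
            \<and> dehn_sommerville G \<longrightarrow> wG G = 0)
       \<and> (\<forall>(G :: 'a set set) d. simplicial_complex G \<and> odd d \<and> manifold d G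
            \<longrightarrow> wG G = 0)"
  using wG_dehn_sommerville wG_odd_manifold by auto

end
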